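(* $\mathrm{SO}\text{-}\mathrm{EKROM}$ is closed under substructures: for every $\mathrm{SO}\text{-}\mathrm{EKROM}(\tau)$ sentence $\Phi$ and all finite $\tau$-structures $\mathcal{A},\mathcal{B}$ with $\mathcal{B}$ a substructure of $\mathcal{A}$, if $\mathcal{A}\models\Phi$ then $\mathcal{B}\models\Phi$.
   Context: For a vocabulary $\tau$ (containing equality), an SO-EKROM$(\tau)$ (second-order extended Krom) formula is a second-order formula of the form $\forall X_1\exists Y_1\cdots\forall X_k\exists Y_k\forall\bar{x}(C_1\wedge\cdots\wedge C_n)$, where $X_i,Y_i$ are relation variables and each clause $C_i$ is a disjunction $\alpha_1\vee\cdots\vee\alpha_l\vee H_1\vee H_2$ in which each $\alpha_s$ is $Q\bar{y}$ or $\neg Q\bar{y}$ with $Q\in\tau\cup\{X_1,\dots,X_k\}$, and each $H_t$ is $Y_i\bar{z}$ or $\neg Y_i\bar{z}$ for some $1\le i\le k$. *)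

theory Defs
  imports Main
begin

text \<open>A (relational) vocabulary tau is given by a type 'r of relation symbols
  together with an arity function ar. Equality is always available (it is a
  built-in literal in the syntax below).\<close>

type_synonym ('a, 'r) struct = "'a set \<times> ('r \<Rightarrow> 'a list set)"

definition is_structure :: "('r \<Rightarrow> nat) \<Rightarrow> ('a, 'r) struct \<Rightarrow> bool" where
  "is_structure ar S \<longleftrightarrow> fst S \<noteq> {} \<and>
     (\<forall>R. \<forall>t \<in> snd S R. length t = ar R \<and> set t \<subseteq> fst S)"

definition finite_structure :: "('r \<Rightarrow> nat) \<Rightarrow> ('a, 'r) struct \<Rightarrow> bool" where
  "finite_structure ar S \<longleftrightarrow> is_structure ar S \<and> finite (fst S)"

definition substructure :: "('r \<Rightarrow> nat) \<Rightarrow> ('a, 'r) struct \<Rightarrow> ('a, 'r) struct \<Rightarrow> bool" where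
  "substructure ar B A \<longleftrightarrow> is_structure ar A \<and> is_structure ar B \<and>
     fst B \<subseteq> fst A \<and> (\<forall>R. snd B R = {t \<in> snd A R. set t \<subseteq> fst B})"

text \<open>First-order variables are natural numbers. Second-order variables X_i, Y_i
  are referred to by their index i (0-based).\<close>

text \<open>Literals alpha over tau, equality and the universally quantified X_i
  (the Boolean is the polarity: True = positive, False = negated).\<close>
datatype 'r alit =
    LRel bool 'r "nat list"
  | LEq bool nat nat
  | LX bool nat "nat list"

datatype hlit = LY bool nat "nat list"

text \<open>A clause: alpha_1 \/ ... \/ alpha_l \/ H_1 \/ H_2 with at most two H-literals.\<close>
type_synonym 'r clause = "'r alit list \<times> hlit list"

text \<open>An SO-EKROM formula: the prefix lists the arities (arity X_i, arity Y_i) of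
  the blocks forall X_i exists Y_i (i = 1..k), and the matrix is a list of clauses.
  All first-order variables are universally quantified (forall x-bar).\<close>
type_synonym 'r so_ekrom = "(nat \<times> nat) list \<times> 'r clause list"

fun wf_alit :: "('r \<Rightarrow> nat) \<Rightarrow> (nat \<times> nat) list \<Rightarrow> 'r alit \<Rightarrow> bool" where
  "wf_alit ar ps (LRel b R ys) = (length ys = ar R)"
| "wf_alit ar ps (LEq b y z) = True"
| "wf_alit ar ps (LX b i ys) = (i < length ps \<and> length ys = fst (ps ! i))"

fun wf_hlit :: "(nat \<times> nat) list \<Rightarrow> hlit \<Rightarrow> bool" where
  "wf_hlit ps (LY b i ys) = (i < length ps \<and> length ys = snd (ps ! i))"

definition wf_clause :: "('r \<Rightarrow> nat) \<Rightarrow> (nat \<times> nat) list \<Rightarrow> 'r clause \<Rightarrow> bool" where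
  "wf_clause ar ps C \<longleftrightarrow> (\<forall>a \<in> set (fst C). wf_alit ar ps a) \<and>
     length (snd C) \<le> 2 \<and> (\<forall>h \<in> set (snd C). wf_hlit ps h)"

definition so_ekrom_sentence :: "('r \<Rightarrow> nat) \<Rightarrow> 'r so_ekrom \<Rightarrow> bool" where
  "so_ekrom_sentence ar \<Phi> \<longleftrightarrow> (\<forall>C \<in> set (snd \<Phi>). wf_clause ar (fst \<Phi>) C)"

fun sem_alit :: "('a, 'r) struct \<Rightarrow> 'a list set list \<Rightarrow> (nat \<Rightarrow> 'a) \<Rightarrow> 'r alit \<Rightarrow> bool" where
  "sem_alit S Xs v (LRel b R ys) = ((map v ys \<in> snd S R) = b)"
| "sem_alit S Xs v (LEq b y z) = ((v y = v z) = b)"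
| "sem_alit S Xs v (LX b i ys) = ((map v ys \<in> Xs ! i) = b)"

fun sem_hlit :: "'a list set list \<Rightarrow> (nat \<Rightarrow> 'a) \<Rightarrow> hlit \<Rightarrow> bool" where
  "sem_hlit Ys v (LY b i ys) = ((map v ys \<in> Ys ! i) = b)"

definition sem_clause ::
  "('a, 'r) struct \<Rightarrow> 'a list set list \<Rightarrow> 'a list set list \<Rightarrow> (nat \<Rightarrow> 'a) \<Rightarrow> 'r clause \<Rightarrow> bool" where
  "sem_clause S Xs Ys v C \<longleftrightarrow> (\<exists>a \<in> set (fst C). sem_alit S Xs v a) \<or> (\<exists>h \<in> set (snd C). sem_hlit Ys v h)"

definition sem_matrix ::
  "('a, 'r) struct \<Rightarrow> 'r clause list \<Rightarrow> 'a list set list \<Rightarrow> 'a list set list \<Rightarrow> bool" where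
  "sem_matrix S Cs Xs Ys \<longleftrightarrow>
     (\<forall>v. (\<forall>x. v x \<in> fst S) \<longrightarrow> (\<forall>C \<in> set Cs. sem_clause S Xs Ys v C))"

definition rels :: "'a set \<Rightarrow> nat \<Rightarrow> 'a list set set" where
  "rels U n = Pow {t. length t = n \<and> set t \<subseteq> U}"

text \<open>Second-order prefix forall X_1 exists Y_1 ... forall X_k exists Y_k, with
  valuations of the already quantified X's and Y's accumulated in lists.\<close>
fun sem_prefix ::
  "('a, 'r) struct \<Rightarrow> (nat \<times> nat) list \<Rightarrow> 'r clause list \<Rightarrow> 'a list set list \<Rightarrow> 'a list set list \<Rightarrow> bool" where
  "sem_prefix S [] Cs Xs Ys = sem_matrix S Cs Xs Ys"
| "sem_prefix S ((a, b) # ps) Cs Xs Ys =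
     (\<forall>X \<in> rels (fst S) a. \<exists>Y \<in> rels (fst S) b. sem_prefix S ps Cs (Xs @ [X]) (Ys @ [Y]))"

definition models :: "('a, 'r) struct \<Rightarrow> 'r so_ekrom \<Rightarrow> bool" (infix "\<Turnstile>" 50) where
  "S \<Turnstile> \<Phi> \<longleftrightarrow> sem_prefix S (fst \<Phi>) (snd \<Phi>) [] []"

end

theory Submission
  imports Defs
begin

text \<open>The matrix is a universal first-order formula, so it survives passing to a
  substructure as long as the existentially quantified relations are interpreted
  consistently on tuples from the smaller universe. Going down the prefix, a choice
  of X over B is also a choice over A; the answer Y that A provides, restricted to
  tuples over B, answers X in B.\<close>

definition agree_on :: "'a set \<Rightarrow> 'a list set list \<Rightarrow> 'a list set list \<Rightarrow> bool" where
  "agree_on U Ys Ys' \<longleftrightarrow> (\<forall>i t. set t \<subseteq> U \<longrightarrow> (t \<in> Ys ! i \<longleftrightarrow> t \<in> Ys' ! i))"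

definition restrict_rel :: "'a set \<Rightarrow> 'a list set \<Rightarrow> 'a list set" where
  "restrict_rel U Y = {t \<in> Y. set t \<subseteq> U}"

lemma rels_mono: "U \<subseteq> V \<Longrightarrow> rels U n \<subseteq> rels V n"
  unfolding rels_def by blast

lemma restrict_rel_in_rels: "Y \<in> rels V n \<Longrightarrow> restrict_rel U Y \<in> rels U n"
  unfolding rels_def restrict_rel_def by auto

text \<open>Indices beyond the lists are harmless: for lists of equal length both sides
  of the appended lists evaluate to the same unspecified nth of the empty list.\<close>
lemma agree_on_append_restrict:
  assumes "agree_on U Ys Ys'" and "length Ys = length Ys'"
  shows "agree_on U (Ys @ [restrict_rel U Y]) (Ys' @ [Y])"
  using assms unfolding agree_on_def restrict_rel_def
  by (auto simp: nth_append nth_Cons split: nat.splits)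

lemma substructure_universe_subset: "substructure ar B A \<Longrightarrow> fst B \<subseteq> fst A"
  unfolding substructure_def by blast

lemma sem_alit_substructure:
  assumes "substructure ar B A" and "\<forall>x. v x \<in> fst B"
  shows "sem_alit B Xs v a = sem_alit A Xs v a"
proof -
  have "set (map v ys) \<subseteq> fst B" for ys using assms(2) by auto
  then show ?thesis using assms(1) unfolding substructure_def by (cases a) auto
qed

lemma sem_hlit_agree_on:
  assumes "agree_on U Ys Ys'" and "\<forall>x. v x \<in> U"
  shows "sem_hlit Ys v h = sem_hlit Ys' v h"
proof -
  have "set (map v ys) \<subseteq> U" for ys using assms(2) by auto
  then show ?thesis using assms(1) unfolding agree_on_def by (cases h) auto
qed

lemma sem_matrix_substructure:
  assumes sub: "substructure ar B A" and agree: "agree_on (fst B) YsB YsA"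
    and "sem_matrix A Cs Xs YsA"
  shows "sem_matrix B Cs Xs YsB"
  unfolding sem_matrix_def
proof (intro allI impI ballI)
  fix v :: "nat \<Rightarrow> _" and C assume v: "\<forall>x. v x \<in> fst B" and C: "C \<in> set Cs"
  then have "\<forall>x. v x \<in> fst A" using substructure_universe_subset[OF sub] by blast
  then have "sem_clause A Xs YsA v C" using assms(3) C unfolding sem_matrix_def by blast
  then show "sem_clause B Xs YsB v C"
    unfolding sem_clause_def
    using sem_alit_substructure[OF sub v] sem_hlit_agree_on[OF agree v] by auto
qed

lemma sem_prefix_substructure:
  assumes sub: "substructure ar B A"
  shows "length YsB = length YsA \<Longrightarrow> agree_on (fst B) YsB YsA \<Longrightarrow>
    sem_prefix A ps Cs Xs YsA \<Longrightarrow> sem_prefix B ps Cs Xs YsB"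
proof (induction ps arbitrary: Xs YsA YsB)
  case Nil
  then show ?case using sem_matrix_substructure[OF sub] by simp
next
  case (Cons p ps)
  obtain a b where p: "p = (a, b)" by (cases p)
  show ?case unfolding p sem_prefix.simps
  proof
    fix X assume "X \<in> rels (fst B) a"
    then have "X \<in> rels (fst A) a"
      using rels_mono[OF substructure_universe_subset[OF sub]] by blast
    then obtain Y where Y: "Y \<in> rels (fst A) b"
      and prefix_A: "sem_prefix A ps Cs (Xs @ [X]) (YsA @ [Y])"
      using Cons.prems(3) unfolding p by auto
    have agree: "agree_on (fst B) (YsB @ [restrict_rel (fst B) Y]) (YsA @ [Y])"
      using agree_on_append_restrict[OF Cons.prems(2,1)] .
    have "sem_prefix B ps Cs (Xs @ [X]) (YsB @ [restrict_rel (fst B) Y])"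
      using Cons.IH[OF _ agree prefix_A] Cons.prems(1) by simp
    then show "\<exists>Y\<in>rels (fst B) b. sem_prefix B ps Cs (Xs @ [X]) (YsB @ [Y])"
      using restrict_rel_in_rels[OF Y] by blast
  qed
qed

theorem proposition4p2:
  fixes ar :: "'r \<Rightarrow> nat"
    and \<Phi> :: "'r so_ekrom"
    and A B :: "('a, 'r) struct"
  assumes "so_ekrom_sentence ar \<Phi>"
    and "finite_structure ar A"
    and "finite_structure ar B"
    and "substructure ar B A"
    and "A \<Turnstile> \<Phi>"
  shows "B \<Turnstile> \<Phi>"
  using sem_prefix_substructure[OF assms(4), of "[]" "[]"] assms(5)
  unfolding models_def agree_on_def by simp

end
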